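(* Let $\mathbb{F}$ be an algebraically closed field with $\mathrm{char}\,\mathbb{F}=2$, let $\mathbb{M}\subseteq\mathbf{O}$ be the quaternion subalgebra, and let $\mathrm{Stab}_{{\rm G}_2}(\mathbb{M})=\{g\in{\rm G}_2\mid g\mathbb{M}\subseteq\mathbb{M}\}$. Then: 1. For every $a\in\mathbb{M}$ with $\mathrm{tr}(a)=1$ and $n(a)=0$ there exists $g\in\mathrm{Stab}_{{\rm G}_2}(\mathbb{M})$ with $ga=e_1$. 2. For every $a\in\mathbb{M}$ with $\mathrm{tr}(a)=0$ and $n(a)=1$ there exists $g\in\mathrm{Stab}_{{\rm G}_2}(\mathbb{M})$ with $ga\in\{1_{\mathbf{O}},1_{\mathbf{O}}+\mathbf{u}_1\}$. 3. For every non-zero $\gamma\in\mathbb{F}$ there exists $\xi_\gamma\in\mathrm{Stab}_{{\rm G}_2}(\mathbb{M})$ such that for all $\alpha_1,\ldots,\alpha_4\in\mathbb{F}$, $\xi_\gamma\begin{pmatrix}\alpha_1&(\alpha_2,0,0)\\(\alpha_3,0,0)&\alpha_4\end{pmatrix}=\begin{pmatrix}\alpha_1&(\gamma\alpha_2,0,0)\\(\gamma^{-1}\alpha_3,0,0)&\alpha_4\end{pmatrix}$. 4. If $b_1,b_2\in\mathbb{M}$ satisfy $\mathrm{tr}(b_1)=\mathrm{tr}(e_1)$, $\mathrm{tr}(b_2)=\mathrm{tr}(e_2)$, $n(b_1)=n(e_1)$, $n(b_2)=n(e_2)$ and $\mathrm{tr}(b_1b_2)=\mathrm{tr}(e_1e_2)$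 (i.e. $(e_1,e_2)$ and $(b_1,b_2)$ are not separated by $S_2^{(2)}$), then there exists $g\in\mathrm{Stab}_{{\rm G}_2}(\mathbb{M})$ with $gb_1=e_1$ and $gb_2\in\{e_2,e_2+\mathbf{u}_1,e_2+\mathbf{v}_1\}$. 5. If $b\in\mathbb{M}$ satisfies $\mathrm{tr}(b)=n(b)=\mathrm{tr}(e_1b)=0$, then $b\in\mathbb{F}\mathbf{u}_1$ or $b\in\mathbb{F}\mathbf{v}_1$.
   Context: The split octonion algebra $\mathbf{O}$ is the 8-dimensional $\mathbb{F}$-vector space of formal matrices $a=\begin{pmatrix}\alpha&\mathbf{u}\\ \mathbf{v}&\beta\end{pmatrix}$ with $\alpha,\beta\in\mathbb{F}$, $\mathbf{u},\mathbf{v}\in\mathbb{F}^3$, with multiplication $\begin{pmatrix}\alpha&\mathbf{u}\\ \mathbf{v}&\beta\end{pmatrix}\begin{pmatrix}\alpha'&\mathbf{u}'\\ \mathbf{v}'&\beta'\end{pmatrix}=\begin{pmatrix}\alpha\alpha'+\mathbf{u}\cdot\mathbf{v}'&\alpha\mathbf{u}'+\beta'\mathbf{u}-\mathbf{v}\times\mathbf{v}'\\ \alpha'\mathbf{v}+\beta\mathbf{v}'+\mathbf{u}\times\mathbf{u}'&\beta\beta'+\mathbf{v}\cdot\mathbf{u}'\end{pmatrix}$ (dot product and cross product on $\mathbb{F}^3$). Trace $\mathrm{tr}(a)=\alpha+\beta$, norm $n(a)=\alpha\beta-\mathbf{u}\cdot\mathbf{v}$. With $\mathbf{c}_1$ the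 first standard basis vector of $\mathbb{F}^3$: $e_1$ has $\alpha=1$ and all else $0$, $e_2$ has $\beta=1$ and all else $0$, $\mathbf{u}_1$ has $\mathbf{u}=\mathbf{c}_1$ and all else $0$, $\mathbf{v}_1$ has $\mathbf{v}=\mathbf{c}_1$ and all else $0$, $1_{\mathbf{O}}=e_1+e_2$. The quaternion subalgebra is $\mathbb{M}=\left\{\begin{pmatrix}\alpha&(\gamma,0,0)\\(\delta,0,0)&\beta\end{pmatrix}\mid\alpha,\beta,\gamma,\delta\in\mathbb{F}\right\}$ (isomorphic to $M_2(\mathbb{F})$). ${\rm G}_2=\mathrm{Aut}(\mathbf{O})$. *)

theory Defs
  imports "HOL-Computational_Algebra.Polynomial"
begin

text \<open>Split octonions over a field: formal matrices (alpha, u; v, beta),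
  alpha, beta scalars, u, v in F^3 (triples).\<close>

datatype 'a oct = Oct (oal: 'a) (ouu: "'a \<times> 'a \<times> 'a") (ovv: "'a \<times> 'a \<times> 'a") (obe: 'a)

definition vdot :: "'a::comm_ring_1 \<times> 'a \<times> 'a \<Rightarrow> 'a \<times> 'a \<times> 'a \<Rightarrow> 'a" where
  "vdot x y = (case x of (x1,x2,x3) \<Rightarrow> case y of (y1,y2,y3) \<Rightarrow> x1*y1 + x2*y2 + x3*y3)"

definition vcross :: "'a::comm_ring_1 \<times> 'a \<times> 'a \<Rightarrow> 'a \<times> 'a \<times> 'a \<Rightarrow> 'a \<times> 'a \<times> 'a" where
  "vcross x y = (case x of (x1,x2,x3) \<Rightarrow> case y of (y1,y2,y3) \<Rightarrow>
      (x2*y3 - x3*y2, x3*y1 - x1*y3, x1*y2 - x2*y1))"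

definition vadd :: "'a::comm_ring_1 \<times> 'a \<times> 'a \<Rightarrow> 'a \<times> 'a \<times> 'a \<Rightarrow> 'a \<times> 'a \<times> 'a" where
  "vadd x y = (case x of (x1,x2,x3) \<Rightarrow> case y of (y1,y2,y3) \<Rightarrow> (x1+y1, x2+y2, x3+y3))"

definition vsmul :: "'a::comm_ring_1 \<Rightarrow> 'a \<times> 'a \<times> 'a \<Rightarrow> 'a \<times> 'a \<times> 'a" where
  "vsmul c x = (case x of (x1,x2,x3) \<Rightarrow> (c*x1, c*x2, c*x3))"

definition vneg :: "'a::comm_ring_1 \<times> 'a \<times> 'a \<Rightarrow> 'a \<times> 'a \<times> 'a" where
  "vneg x = vsmul (-1) x"

definition oadd :: "'a::comm_ring_1 oct \<Rightarrow> 'a oct \<Rightarrow> 'a oct" where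
  "oadd a b = Oct (oal a + oal b) (vadd (ouu a) (ouu b)) (vadd (ovv a) (ovv b)) (obe a + obe b)"

definition osmul :: "'a::comm_ring_1 \<Rightarrow> 'a oct \<Rightarrow> 'a oct" where
  "osmul c a = Oct (c * oal a) (vsmul c (ouu a)) (vsmul c (ovv a)) (c * obe a)"

definition omult :: "'a::comm_ring_1 oct \<Rightarrow> 'a oct \<Rightarrow> 'a oct" where
  "omult a b = Oct
     (oal a * oal b + vdot (ouu a) (ovv b))
     (vadd (vadd (vsmul (oal a) (ouu b)) (vsmul (obe b) (ouu a))) (vneg (vcross (ovv a) (ovv b))))
     (vadd (vadd (vsmul (oal b) (ovv a)) (vsmul (obe a) (ovv b))) (vcross (ouu a) (ouu b)))
     (obe a * obe b + vdot (ovv a) (ouu b))"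

definition otr :: "'a::comm_ring_1 oct \<Rightarrow> 'a" where
  "otr a = oal a + obe a"

definition onorm :: "'a::comm_ring_1 oct \<Rightarrow> 'a" where
  "onorm a = oal a * obe a - vdot (ouu a) (ovv a)"

definition oe1 :: "'a::comm_ring_1 oct" where "oe1 = Oct 1 (0,0,0) (0,0,0) 0"
definition oe2 :: "'a::comm_ring_1 oct" where "oe2 = Oct 0 (0,0,0) (0,0,0) 1"
definition ou1 :: "'a::comm_ring_1 oct" where "ou1 = Oct 0 (1,0,0) (0,0,0) 0"
definition ov1 :: "'a::comm_ring_1 oct" where "ov1 = Oct 0 (0,0,0) (1,0,0) 0"
definition oone :: "'a::comm_ring_1 oct" where "oone = oadd oe1 oe2"

definition quatM :: "'a::comm_ring_1 oct set" where
  "quatM = {Oct \<alpha> (\<gamma>,0,0) (\<delta>,0,0) \<beta> | \<alpha> \<beta> \<gamma> \<delta>. True}"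

definition G2 :: "('a::comm_ring_1 oct \<Rightarrow> 'a oct) set" where
  "G2 = {g. bij g \<and> (\<forall>x y. g (oadd x y) = oadd (g x) (g y))
              \<and> (\<forall>c x. g (osmul c x) = osmul c (g x))
              \<and> (\<forall>x y. g (omult x y) = omult (g x) (g y))}"

definition StabM :: "('a::comm_ring_1 oct \<Rightarrow> 'a oct) set" where
  "StabM = {g \<in> G2. g ` quatM \<subseteq> quatM}"

definition alg_closed :: "'a::field itself \<Rightarrow> bool" where
  "alg_closed _ \<longleftrightarrow> (\<forall>p :: 'a poly. degree p > 0 \<longrightarrow> (\<exists>x. poly p x = 0))"

end

theory Submission
  imports Defs
begin

text \<open>Identify the quaternion subalgebra \<open>M\<close> with \<open>M\<^sub>2(F)\<close> and write \<open>O = M \<oplus> M\<ell>\<close>.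
  For \<open>P \<in> GL\<^sub>2(F)\<close> the map \<open>x + y\<ell> \<mapsto> PxP\<^sup>-\<^sup>1 + (PyP\<^sup>-\<^sup>1)\<ell>\<close> is an automorphism of \<open>O\<close>
  stabilising \<open>M\<close> and preserving trace and norm. All five statements then reduce to
  normal forms of \<open>2\<times>2\<close> matrices under conjugation, with explicit conjugating matrices;
  characteristic 2 is only needed for the unipotent case, where \<open>tr = 0\<close> and \<open>n = 1\<close> make
  \<open>a - 1\<close> nilpotent, and algebraic closedness is not needed at all.\<close>

abbreviation quat :: "'a \<Rightarrow> 'a \<Rightarrow> 'a \<Rightarrow> 'a \<Rightarrow> 'a::comm_ring_1 oct" where
  "quat \<alpha> \<gamma> \<delta> \<beta> \<equiv> Oct \<alpha> (\<gamma>,0,0) (\<delta>,0,0) \<beta>"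

lemma quatM_cases [consumes 1]:
  assumes "x \<in> quatM"
  obtains \<alpha> \<gamma> \<delta> \<beta> where "x = quat \<alpha> \<gamma> \<delta> \<beta>"
  using assms unfolding quatM_def by blast

lemma oct_cases8:
  obtains \<alpha> u1 u2 u3 v1 v2 v3 \<beta> where "x = Oct \<alpha> (u1,u2,u3) (v1,v2,v3) \<beta>"
  by (cases x) auto

lemmas oct_simps = oadd_def osmul_def omult_def vdot_def vcross_def vadd_def vsmul_def vneg_def
  otr_def onorm_def

lemma osmul_osmul: "osmul k (osmul l x) = osmul (k * l) (x::'a::comm_ring_1 oct)"
  by (rule oct_cases8[of x]) (simp add: oct_simps algebra_simps)

lemma osmul_1: "osmul 1 (x::'a::comm_ring_1 oct) = x"
  by (rule oct_cases8[of x]) (simp add: oct_simps)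

lemma omult_osmul: "omult (osmul k x) (osmul l y) = osmul (k * l) (omult x (y::'a::comm_ring_1 oct))"
  by (rule oct_cases8[of x], rule oct_cases8[of y]) (simp add: oct_simps algebra_simps)

lemma otr_osmul: "otr (osmul k x) = k * otr (x::'a::comm_ring_1 oct)"
  by (simp add: oct_simps algebra_simps)

lemma onorm_osmul: "onorm (osmul k x) = k\<^sup>2 * onorm (x::'a::comm_ring_1 oct)"
  by (rule oct_cases8[of x]) (simp add: oct_simps algebra_simps power2_eq_square)

text \<open>The entries of \<open>P N adj(P)\<close> for \<open>P = [[a,b],[c,d]]\<close> and \<open>N = [[n11,n12],[n21,n22]]\<close>.\<close>

definition sandwich11 :: "'a::comm_ring_1 \<Rightarrow> 'a \<Rightarrow> 'a \<Rightarrow> 'a \<Rightarrow> 'a \<Rightarrow> 'a \<Rightarrow> 'a \<Rightarrow> 'a \<Rightarrow> 'a" where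
  "sandwich11 a b c d n11 n12 n21 n22 = (a*n11 + b*n21)*d - (a*n12 + b*n22)*c"

definition sandwich12 :: "'a::comm_ring_1 \<Rightarrow> 'a \<Rightarrow> 'a \<Rightarrow> 'a \<Rightarrow> 'a \<Rightarrow> 'a \<Rightarrow> 'a \<Rightarrow> 'a \<Rightarrow> 'a" where
  "sandwich12 a b c d n11 n12 n21 n22 = (a*n12 + b*n22)*a - (a*n11 + b*n21)*b"

definition sandwich21 :: "'a::comm_ring_1 \<Rightarrow> 'a \<Rightarrow> 'a \<Rightarrow> 'a \<Rightarrow> 'a \<Rightarrow> 'a \<Rightarrow> 'a \<Rightarrow> 'a \<Rightarrow> 'a" where
  "sandwich21 a b c d n11 n12 n21 n22 = (c*n11 + d*n21)*d - (c*n12 + d*n22)*c"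

definition sandwich22 :: "'a::comm_ring_1 \<Rightarrow> 'a \<Rightarrow> 'a \<Rightarrow> 'a \<Rightarrow> 'a \<Rightarrow> 'a \<Rightarrow> 'a \<Rightarrow> 'a \<Rightarrow> 'a" where
  "sandwich22 a b c d n11 n12 n21 n22 = (c*n12 + d*n22)*a - (c*n11 + d*n21)*b"

lemmas sandwich_defs = sandwich11_def sandwich12_def sandwich21_def sandwich22_def

text \<open>The \<open>M\<close>-component of \<open>Oct \<alpha> (u1,u2,u3) (v1,v2,v3) \<beta>\<close> is \<open>[[\<alpha>,u1],[v1,\<beta>]]\<close>;
  its \<open>M\<ell>\<close>-component is encoded by the matrix \<open>[[u2,v3],[u3,-v2]]\<close>.\<close>

definition sandwich_oct :: "'a::comm_ring_1 \<Rightarrow> 'a \<Rightarrow> 'a \<Rightarrow> 'a \<Rightarrow> 'a oct \<Rightarrow> 'a oct" where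
  "sandwich_oct a b c d x = (case x of Oct \<alpha> (u1,u2,u3) (v1,v2,v3) \<beta> \<Rightarrow>
     Oct (sandwich11 a b c d \<alpha> u1 v1 \<beta>)
         (sandwich12 a b c d \<alpha> u1 v1 \<beta>, sandwich11 a b c d u2 v3 u3 (-v2),
          sandwich21 a b c d u2 v3 u3 (-v2))
         (sandwich21 a b c d \<alpha> u1 v1 \<beta>, - sandwich22 a b c d u2 v3 u3 (-v2),
          sandwich12 a b c d u2 v3 u3 (-v2))
         (sandwich22 a b c d \<alpha> u1 v1 \<beta>))"

lemma sandwich_oct_Oct:
  "sandwich_oct a b c d (Oct \<alpha> (u1,u2,u3) (v1,v2,v3) \<beta>) =
     Oct (sandwich11 a b c d \<alpha> u1 v1 \<beta>)
         (sandwich12 a b c d \<alpha> u1 v1 \<beta>, sandwich11 a b c d u2 v3 u3 (-v2),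
          sandwich21 a b c d u2 v3 u3 (-v2))
         (sandwich21 a b c d \<alpha> u1 v1 \<beta>, - sandwich22 a b c d u2 v3 u3 (-v2),
          sandwich12 a b c d u2 v3 u3 (-v2))
         (sandwich22 a b c d \<alpha> u1 v1 \<beta>)"
  by (simp add: sandwich_oct_def)

lemma sandwich_oct_omult:
  "omult (sandwich_oct a b c d x) (sandwich_oct a b c d y) =
     osmul (a*d - b*c) (sandwich_oct a b c d (omult x y))"
  by (rule oct_cases8[of x], rule oct_cases8[of y])
     (simp add: sandwich_oct_Oct oct_simps sandwich_defs algebra_simps)

lemma sandwich_oct_osmul: "sandwich_oct a b c d (osmul k x) = osmul k (sandwich_oct a b c d x)"
  by (rule oct_cases8[of x]) (simp add: sandwich_oct_Oct oct_simps sandwich_defs algebra_simps)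

lemma sandwich_oct_oadd:
  "sandwich_oct a b c d (oadd x y) = oadd (sandwich_oct a b c d x) (sandwich_oct a b c d y)"
  by (rule oct_cases8[of x], rule oct_cases8[of y])
     (simp add: sandwich_oct_Oct oct_simps sandwich_defs algebra_simps)

lemma sandwich_oct_adjugate:
  "sandwich_oct d (-b) (-c) a (sandwich_oct a b c d x) = osmul ((a*d - b*c)\<^sup>2) x"
  by (rule oct_cases8[of x])
     (simp add: sandwich_oct_Oct oct_simps sandwich_defs algebra_simps power2_eq_square)

lemma otr_sandwich_oct: "otr (sandwich_oct a b c d x) = (a*d - b*c) * otr x"
  by (rule oct_cases8[of x]) (simp add: sandwich_oct_Oct oct_simps sandwich_defs algebra_simps)

lemma onorm_sandwich_oct: "onorm (sandwich_oct a b c d x) = (a*d - b*c)\<^sup>2 * onorm x"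
  by (rule oct_cases8[of x])
     (simp add: sandwich_oct_Oct oct_simps sandwich_defs algebra_simps power2_eq_square)

definition conj_oct :: "'a::field \<Rightarrow> 'a \<Rightarrow> 'a \<Rightarrow> 'a \<Rightarrow> 'a oct \<Rightarrow> 'a oct" where
  "conj_oct a b c d x = osmul (inverse (a*d - b*c)) (sandwich_oct a b c d x)"

lemma conj_oct_inverse:
  assumes "a*d - b*c \<noteq> (0::'a::field)"
  shows "conj_oct d (-b) (-c) a (conj_oct a b c d x) = x"
proof -
  have det: "d*a - (-b)*(-c) = a*d - b*c" by (simp add: algebra_simps)
  have "inverse D * (inverse D * D\<^sup>2) = 1" if "D \<noteq> 0" for D :: 'a
    using that by (simp add: power2_eq_square mult.assoc[symmetric])
  from this[OF assms] show ?thesis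
    unfolding conj_oct_def det sandwich_oct_osmul sandwich_oct_adjugate osmul_osmul by (simp add: osmul_1)
qed

lemma conj_oct_omult:
  assumes "a*d - b*c \<noteq> (0::'a::field)"
  shows "conj_oct a b c d (omult x y) = omult (conj_oct a b c d x) (conj_oct a b c d y)"
proof -
  have "inverse D * inverse D * D = inverse D" if "D \<noteq> 0" for D :: 'a
    using that by (simp add: mult.assoc)
  from this[OF assms] show ?thesis
    unfolding conj_oct_def omult_osmul sandwich_oct_omult osmul_osmul by (simp only:)
qed

lemma conj_oct_G2:
  assumes "a*d - b*c \<noteq> (0::'a::field)"
  shows "conj_oct a b c d \<in> G2"
proof -
  have "d*a - (-b)*(-c) \<noteq> 0" using assms by (simp add: algebra_simps)
  from conj_oct_inverse[OF this] have "conj_oct a b c d (conj_oct d (-b) (-c) a x) = x" for x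
    by simp
  then have "bij (conj_oct a b c d)"
    using conj_oct_inverse[OF assms]
    by (intro o_bij[of "conj_oct d (-b) (-c) a"]) (auto simp: fun_eq_iff)
  moreover have "conj_oct a b c d (oadd x y) = oadd (conj_oct a b c d x) (conj_oct a b c d y)"
    for x y
    unfolding conj_oct_def sandwich_oct_oadd
    by (rule oct_cases8[of "sandwich_oct a b c d x"], rule oct_cases8[of "sandwich_oct a b c d y"])
       (simp add: oct_simps algebra_simps)
  moreover have "conj_oct a b c d (osmul k x) = osmul k (conj_oct a b c d x)" for k x
    by (simp add: conj_oct_def sandwich_oct_osmul osmul_osmul mult.commute)
  ultimately show ?thesis
    using conj_oct_omult[OF assms] unfolding G2_def by blast
qed

lemma conj_oct_quat:
  "conj_oct a b c d (quat \<alpha> \<gamma> \<delta> \<beta>) =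
     quat (inverse (a*d - b*c) * sandwich11 a b c d \<alpha> \<gamma> \<delta> \<beta>)
          (inverse (a*d - b*c) * sandwich12 a b c d \<alpha> \<gamma> \<delta> \<beta>)
          (inverse (a*d - b*c) * sandwich21 a b c d \<alpha> \<gamma> \<delta> \<beta>)
          (inverse (a*d - b*c) * sandwich22 a b c d \<alpha> \<gamma> \<delta> \<beta>)"
  by (simp add: conj_oct_def sandwich_oct_Oct oct_simps sandwich_defs)

lemma conj_oct_quatI:
  assumes "a*d - b*c = D" "D \<noteq> (0::'a::field)"
    and "sandwich11 a b c d \<alpha> \<gamma> \<delta> \<beta> = D * \<alpha>'" "sandwich12 a b c d \<alpha> \<gamma> \<delta> \<beta> = D * \<gamma>'"
    and "sandwich21 a b c d \<alpha> \<gamma> \<delta> \<beta> = D * \<delta>'" "sandwich22 a b c d \<alpha> \<gamma> \<delta> \<beta> = D * \<beta>'"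
  shows "conj_oct a b c d (quat \<alpha> \<gamma> \<delta> \<beta>) = quat \<alpha>' \<gamma>' \<delta>' \<beta>'"
  unfolding conj_oct_quat using assms by (simp add: mult.assoc[symmetric])

lemma conj_oct_StabM:
  assumes "a*d - b*c \<noteq> (0::'a::field)"
  shows "conj_oct a b c d \<in> StabM"
  using conj_oct_G2[OF assms] unfolding StabM_def quatM_def by (auto simp: conj_oct_quat)

lemma otr_conj_oct:
  assumes "a*d - b*c \<noteq> (0::'a::field)"
  shows "otr (conj_oct a b c d x) = otr x"
  using assms by (simp add: conj_oct_def otr_osmul otr_sandwich_oct)

lemma onorm_conj_oct:
  assumes "a*d - b*c \<noteq> (0::'a::field)"
  shows "onorm (conj_oct a b c d x) = onorm x"
  using assms
  by (simp add: conj_oct_def onorm_osmul onorm_sandwich_oct power_mult_distrib[symmetric])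

lemma StabM_comp: "f \<in> StabM \<Longrightarrow> g \<in> StabM \<Longrightarrow> f \<circ> g \<in> StabM"
  unfolding StabM_def G2_def by (auto intro: bij_comp simp: image_subset_iff)

lemma oone_quat: "oone = quat 1 0 0 (1::'a::comm_ring_1)"
  by (simp add: oone_def oe1_def oe2_def oct_simps)

lemma oadd_oone_ou1_quat: "oadd oone ou1 = quat 1 1 0 (1::'a::comm_ring_1)"
  by (simp add: oone_def oe1_def oe2_def ou1_def oct_simps)

lemma oadd_oe2_ou1_quat: "oadd oe2 ou1 = quat 0 1 0 (1::'a::comm_ring_1)"
  by (simp add: oe2_def ou1_def oct_simps)

lemma oadd_oe2_ov1_quat: "oadd oe2 ov1 = quat 0 0 1 (1::'a::comm_ring_1)"
  by (simp add: oe2_def ov1_def oct_simps)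

text \<open>In each case the rows of the conjugating matrix are left eigenvectors of \<open>x\<close>
  for the eigenvalues \<open>1\<close> and \<open>0\<close>.\<close>

lemma quat_idempotent_conj_oe1:
  fixes x :: "'a::field oct"
  assumes "x \<in> quatM" "otr x = 1" "onorm x = 0"
  obtains a b c d where "conj_oct a b c d x = oe1" "a*d - b*c \<noteq> 0"
proof -
  from assms(1) obtain \<alpha> \<gamma> \<delta> \<beta> where x: "x = quat \<alpha> \<gamma> \<delta> \<beta>" by (cases rule: quatM_cases)
  have tr: "\<alpha> + \<beta> = 1" and norm: "\<alpha>*\<beta> - \<gamma>*\<delta> = 0"
    using assms unfolding x by (simp_all add: oct_simps)
  show thesis
  proof (cases "\<alpha> = 0")
    case False
    have det: "\<alpha>*\<alpha> - \<gamma>*(-\<delta>) = \<alpha>" using tr norm by algebra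
    have "conj_oct \<alpha> \<gamma> (-\<delta>) \<alpha> x = oe1"
      unfolding x oe1_def
      apply (rule conj_oct_quatI[OF det False])
      using tr norm unfolding sandwich_defs by algebra+
    then show thesis by (rule that) (unfold det, rule False)
  next
    case True
    with tr norm have \<beta>: "\<beta> = 1" and \<gamma>\<delta>: "\<gamma>*\<delta> = 0" by simp_all
    have det: "\<delta>*\<gamma> - \<beta>*(-\<beta>) = 1" using \<beta> \<gamma>\<delta> by algebra
    have "conj_oct \<delta> \<beta> (-\<beta>) \<gamma> x = oe1"
      unfolding x oe1_def
      apply (rule conj_oct_quatI[OF det one_neq_zero])
      using True \<beta> \<gamma>\<delta> unfolding sandwich_defs by algebra+
    then show thesis by (rule that) (unfold det, rule one_neq_zero)
  qed
qed

text \<open>In characteristic 2 such an \<open>x\<close> is unipotent. The rows \<open>r\<^sub>1, r\<^sub>2\<close> of the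
  conjugating matrix form a Jordan basis: \<open>r\<^sub>2 x = r\<^sub>2\<close> and \<open>r\<^sub>1 (x - 1) = r\<^sub>2\<close>.\<close>

lemma quat_unipotent_conj_normal_form:
  fixes x :: "'a::field oct"
  assumes char2: "(2::'a) = 0" and "x \<in> quatM" "otr x = 0" "onorm x = 1"
  obtains a b c d where "conj_oct a b c d x \<in> {oone, oadd oone ou1}" "a*d - b*c \<noteq> 0"
proof -
  from assms(2) obtain \<alpha> \<gamma> \<delta> \<beta> where x: "x = quat \<alpha> \<gamma> \<delta> \<beta>" by (cases rule: quatM_cases)
  have "\<alpha> + \<beta> = 0" and norm: "\<alpha>*\<beta> - \<gamma>*\<delta> = 1"
    using assms unfolding x by (simp_all add: oct_simps)
  with char2 have tr: "\<alpha> + \<beta> = 1 + 1" by simp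
  consider (\<gamma>) "\<gamma> \<noteq> 0" | (\<delta>) "\<gamma> = 0" "\<delta> \<noteq> 0" | (scalar) "\<gamma> = 0" "\<delta> = 0" by blast
  then show thesis
  proof cases
    case \<gamma>
    have det: "1*\<gamma> - 0*(\<alpha> - 1) = \<gamma>" by simp
    have "conj_oct 1 0 (\<alpha> - 1) \<gamma> x = oadd oone ou1"
      unfolding x oadd_oone_ou1_quat
      apply (rule conj_oct_quatI[OF det \<gamma>])
      using tr norm unfolding sandwich_defs by algebra+
    with \<gamma> show thesis by (intro that[of 1 0 "\<alpha> - 1" \<gamma>]) simp_all
  next
    case \<delta>
    have det: "0*(\<beta> - 1) - 1*\<delta> = -\<delta>" and "-\<delta> \<noteq> 0" using \<delta> by simp_all
    have "conj_oct 0 1 \<delta> (\<beta> - 1) x = oadd oone ou1"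
      unfolding x oadd_oone_ou1_quat
      apply (rule conj_oct_quatI[OF det \<open>-\<delta> \<noteq> 0\<close>])
      using \<delta> tr norm unfolding sandwich_defs by algebra+
    with \<delta> show thesis by (intro that[of 0 1 \<delta> "\<beta> - 1"]) simp_all
  next
    case scalar
    have "(\<alpha> - 1)\<^sup>2 = 0" using tr norm scalar by algebra
    then have "\<alpha> = 1" "\<beta> = 1" using tr by simp_all
    then have "conj_oct 1 0 0 1 x = oone"
      unfolding x oone_quat using scalar by (simp add: conj_oct_quat sandwich_defs)
    then show thesis by (intro that[of 1 0 0 1]) simp_all
  qed
qed

lemma conj_oct_diag_quat:
  assumes "p \<noteq> 0" "q \<noteq> (0::'a::field)"
  shows "conj_oct p 0 0 q (quat \<alpha> \<gamma> \<delta> \<beta>) = quat \<alpha> (p / q * \<gamma>) (q / p * \<delta>) \<beta>"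
  using assms by (simp add: conj_oct_quat sandwich_defs field_simps)

lemma quat_diag_conj_normal_form:
  assumes "\<gamma> * \<delta> = (0::'a::field)"
  obtains p q where "p \<noteq> 0" "q \<noteq> 0"
    "conj_oct p 0 0 q (quat 0 \<gamma> \<delta> 1) \<in> {oe2, oadd oe2 ou1, oadd oe2 ov1}"
proof -
  consider (\<gamma>) "\<gamma> \<noteq> 0" "\<delta> = 0" | (\<delta>) "\<gamma> = 0" "\<delta> \<noteq> 0" | (zero) "\<gamma> = 0" "\<delta> = 0"
    using assms by auto
  then show thesis
  proof cases
    case \<gamma>
    then show thesis by (intro that[of 1 \<gamma>]) (simp_all add: conj_oct_diag_quat oadd_oe2_ou1_quat)
  next
    case \<delta>
    then show thesis by (intro that[of \<delta> 1]) (simp_all add: conj_oct_diag_quat oadd_oe2_ov1_quat)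
  next
    case zero
    then show thesis by (intro that[of 1 1]) (simp_all add: conj_oct_diag_quat oe2_def)
  qed
qed

lemma otr_omult_oe1_quat: "otr (omult oe1 (quat \<alpha> \<gamma> \<delta> \<beta>)) = (\<alpha>::'a::comm_ring_1)"
  by (simp add: oe1_def oct_simps)

lemma oe1_oe2_invariants:
  "otr (oe1::'a::comm_ring_1 oct) = 1" "onorm (oe1::'a oct) = 0"
  "otr (oe2::'a oct) = 1" "onorm (oe2::'a oct) = 0" "otr (omult oe1 oe2::'a oct) = 0"
  by (simp_all add: oe1_def oe2_def oct_simps)

lemma quat_idempotent_pair_normal_form:
  fixes b1 b2 :: "'a::field oct"
  assumes "b1 \<in> quatM" "b2 \<in> quatM" "otr b1 = 1" "otr b2 = 1" "onorm b1 = 0" "onorm b2 = 0"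
    and tr12: "otr (omult b1 b2) = 0"
  obtains g where "g \<in> StabM" "g b1 = oe1" "g b2 \<in> {oe2, oadd oe2 ou1, oadd oe2 ov1}"
proof -
  obtain a b c d where b1: "conj_oct a b c d b1 = oe1" and P: "a*d - b*c \<noteq> 0"
    using quat_idempotent_conj_oe1 assms(1,3,5) by blast
  have "conj_oct a b c d b2 \<in> quatM"
    using conj_oct_StabM[OF P] assms(2) unfolding StabM_def by blast
  then obtain \<alpha> \<gamma> \<delta> \<beta> where b2: "conj_oct a b c d b2 = quat \<alpha> \<gamma> \<delta> \<beta>"
    by (cases rule: quatM_cases)
  have "\<alpha> = otr (omult oe1 (conj_oct a b c d b2))" by (simp add: b2 otr_omult_oe1_quat)
  also have "\<dots> = 0"
    using tr12 by (simp flip: b1 conj_oct_omult[OF P] add: otr_conj_oct[OF P])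
  finally have "\<alpha> = 0" .
  moreover have "\<alpha> + \<beta> = 1" "\<alpha>*\<beta> - \<gamma>*\<delta> = 0"
    using assms(4,6) otr_conj_oct[OF P, of b2] onorm_conj_oct[OF P, of b2]
    by (simp_all add: b2 oct_simps)
  ultimately have "\<beta> = 1" "\<gamma> * \<delta> = 0" by simp_all
  then obtain p q where pq: "p \<noteq> 0" "q \<noteq> 0"
    and normal: "conj_oct p 0 0 q (quat 0 \<gamma> \<delta> 1) \<in> {oe2, oadd oe2 ou1, oadd oe2 ov1}"
    using quat_diag_conj_normal_form by blast
  have "conj_oct p 0 0 q oe1 = oe1" using pq by (simp add: oe1_def conj_oct_diag_quat)
  then show thesis
    using \<open>\<alpha> = 0\<close> \<open>\<beta> = 1\<close> b1 b2 normal pq P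
    by (intro that[of "conj_oct p 0 0 q \<circ> conj_oct a b c d"] StabM_comp conj_oct_StabM) simp_all
qed

lemma quat_nilpotent_orthogonal_oe1:
  fixes b :: "'a::field oct"
  assumes "b \<in> quatM" "otr b = 0" "onorm b = 0" "otr (omult oe1 b) = 0"
  shows "(\<exists>c. b = osmul c ou1) \<or> (\<exists>c. b = osmul c ov1)"
proof -
  from assms(1) obtain \<alpha> \<gamma> \<delta> \<beta> where b: "b = quat \<alpha> \<gamma> \<delta> \<beta>" by (cases rule: quatM_cases)
  have "\<alpha> = 0" using assms(4) by (simp add: b otr_omult_oe1_quat)
  moreover have "\<beta> = 0" using assms(2) \<open>\<alpha> = 0\<close> by (simp add: b oct_simps)
  moreover have "\<gamma> = 0 \<or> \<delta> = 0" using assms(3) \<open>\<alpha> = 0\<close> by (simp add: b oct_simps)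
  ultimately have "b = osmul \<gamma> ou1 \<or> b = osmul \<delta> ov1" by (auto simp: b ou1_def ov1_def oct_simps)
  then show ?thesis by blast
qed

theorem lemma7p5:
  fixes F :: "'a::field itself"
  assumes "alg_closed TYPE('a)"
    and "(2::'a) = 0"
  shows
   "(\<forall>a::'a oct. a \<in> quatM \<and> otr a = 1 \<and> onorm a = 0 \<longrightarrow> (\<exists>g\<in>StabM. g a = oe1))
  \<and> (\<forall>a::'a oct. a \<in> quatM \<and> otr a = 0 \<and> onorm a = 1 \<longrightarrow>
        (\<exists>g\<in>StabM. g a \<in> {oone, oadd oone ou1}))
  \<and> (\<forall>\<gamma>::'a. \<gamma> \<noteq> 0 \<longrightarrow> (\<exists>\<xi>\<in>StabM. \<forall>\<alpha>1 \<alpha>2 \<alpha>3 \<alpha>4.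
        \<xi> (Oct \<alpha>1 (\<alpha>2,0,0) (\<alpha>3,0,0) \<alpha>4) = Oct \<alpha>1 (\<gamma>*\<alpha>2,0,0) (inverse \<gamma> * \<alpha>3,0,0) \<alpha>4))
  \<and> (\<forall>b1 b2::'a oct. b1 \<in> quatM \<and> b2 \<in> quatM \<and> otr b1 = otr oe1 \<and> otr b2 = otr oe2
        \<and> onorm b1 = onorm oe1 \<and> onorm b2 = onorm oe2
        \<and> otr (omult b1 b2) = otr (omult oe1 oe2) \<longrightarrow>
        (\<exists>g\<in>StabM. g b1 = oe1 \<and> g b2 \<in> {oe2, oadd oe2 ou1, oadd oe2 ov1}))
  \<and> (\<forall>b::'a oct. b \<in> quatM \<and> otr b = 0 \<and> onorm b = 0 \<and> otr (omult oe1 b) = 0 \<longrightarrow>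
        (\<exists>c. b = osmul c ou1) \<or> (\<exists>c. b = osmul c ov1))"
proof (intro conjI allI impI; (elim conjE)?)
  fix a :: "'a oct"
  assume "a \<in> quatM" "otr a = 1" "onorm a = 0"
  then show "\<exists>g\<in>StabM. g a = oe1"
    by (rule quat_idempotent_conj_oe1) (blast intro: conj_oct_StabM)
next
  fix a :: "'a oct"
  assume "a \<in> quatM" "otr a = 0" "onorm a = 1"
  with assms(2) show "\<exists>g\<in>StabM. g a \<in> {oone, oadd oone ou1}"
    by (rule quat_unipotent_conj_normal_form) (blast intro: conj_oct_StabM)
next
  fix \<gamma> :: 'a
  assume "\<gamma> \<noteq> 0"
  then show "\<exists>\<xi>\<in>StabM. \<forall>\<alpha>1 \<alpha>2 \<alpha>3 \<alpha>4.
      \<xi> (Oct \<alpha>1 (\<alpha>2,0,0) (\<alpha>3,0,0) \<alpha>4) = Oct \<alpha>1 (\<gamma>*\<alpha>2,0,0) (inverse \<gamma> * \<alpha>3,0,0) \<alpha>4"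
    by (intro bexI[of _ "conj_oct \<gamma> 0 0 1"] allI conj_oct_StabM)
       (simp_all add: conj_oct_diag_quat field_simps)
next
  fix b1 b2 :: "'a oct"
  assume "b1 \<in> quatM" "b2 \<in> quatM" "otr b1 = otr oe1" "otr b2 = otr oe2"
    "onorm b1 = onorm oe1" "onorm b2 = onorm oe2" "otr (omult b1 b2) = otr (omult oe1 oe2)"
  then obtain g where "g \<in> StabM" "g b1 = oe1" "g b2 \<in> {oe2, oadd oe2 ou1, oadd oe2 ov1}"
    unfolding oe1_oe2_invariants by (rule quat_idempotent_pair_normal_form)
  then show "\<exists>g\<in>StabM. g b1 = oe1 \<and> g b2 \<in> {oe2, oadd oe2 ou1, oadd oe2 ov1}" by blast
qed (fact quat_nilpotent_orthogonal_oe1)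

end
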